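(* Let $A$ be a finite alphabet, $w_1,\ldots,w_k\in A^*$, and $N=\max(|w_1|,\ldots,|w_k|)\ge1$. The following are equivalent: (1) $\mathrm{WMIX}(w_1,\ldots,w_k)$ is infinite. (2) There exists a trace $T\subseteq\mathcal P(\mathcal D_N)\cup\mathcal C(\mathcal D_N)$ of some walk in $\mathcal D_N$, written $T=\{\pi\}\cup\{\gamma_1,\ldots,\gamma_m\}$ with $\pi$ its unique path and $\gamma_1,\ldots,\gamma_m$ its pairwise distinct cycles, satisfying both (balance condition) there exist integers $x_1,\ldots,x_m\ge1$ such that \[\mathrm{diff}\Big(\mathrm{occ}(\mathrm{src}(\pi);w_1,\ldots,w_k)+\mathrm{occ}(\pi;w_1,\ldots,w_k)+\sum_{i=1}^m x_i\cdot\mathrm{occ}(\gamma_i;w_1,\ldots,w_k)\Big)=0,\] where $\mathrm{src}(\pi)\in A^N$ is regarded as a word; and (pumping condition) there exist $y_1,\ldots,y_m\in\mathbb N$, not all zero, such that \[\mathrm{diff}\Big(\sum_{i=1}^m y_i\cdot\mathrm{occ}(\gamma_i;w_1,\ldots,w_k)\Big)=0.\]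
   Context: For $u,w\in A^*$, $|w|_u$ is the number of pairs $(x,y)\in A^*\times A^*$ with $xuy=w$. $\mathrm{WMIX}(w_1,\ldots,w_k)=\{w\in A^*\mid|w|_{w_1}=\cdots=|w|_{w_k}\}$. For $\bm v=(c_1,\ldots,c_k)\in\mathbb N^k$, $\mathrm{diff}(\bm v)=\sum_{i=1}^k(\max(c_1,\ldots,c_k)-c_i)$ (so $\mathrm{diff}(\bm v)=0$ iff all coordinates are equal). $\mathrm{suff}(w)$ is the set of suffixes of $w$. A (directed) graph is $\mathcal G=(V,E)$ with $E\subseteq V\times V$. A walk is a sequence $\omega=(v_1,\ldots,v_n)\in V^n$, $n\ge1$, with $(v_i,v_{i+1})\in E$ for all $1\le i<n$; its length is $|\omega|=n-1$, its source $\mathrm{src}(\omega)$ is $v_1$ and its target is $v_n$. $V(\omega)=\{v_1,\ldots,v_n\}$. If the target of $\omega_1=(v_1,\ldots,v_m)$ equals the source of $\omega_2=(v'_1,\ldots,v'_n)$, then $\omega_1\odot\omega_2=(v_1,\ldots,v_m,v'_2,\ldots,v'_n)$. A loop is a non-empty walk whose source equals its target. A path is a walk whose vertices are pairwise distinct (empty walks are paths). A cycle is a loop $(v,v_1,\ldots,v_n,v)$ such that $(v,v_1,\ldots,v_n)$ is a path. $\mathcal W(\mathcal G),\mathcal P(\mathcal G),\mathcal C(\mathcal G)$ denote the sets of walks, paths and cycles. For a sequence of cycles $\Gamma=(\gamma_1,\ldots,\gamma_n)$: $|\Gamma|_\gamma=\#\{i\mid\gamma_i=\gamma\}$, $\Gamma.\gamma=(\gamma_1,\ldots,\gamma_n,\gamma)$;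 $\emptyset$ is the empty sequence. Decomposition $\mathrm{dec}_{\mathcal G}:\mathcal W(\mathcal G)\to\mathcal P(\mathcal G)\times\mathcal C(\mathcal G)^*$, by induction on length: $\mathrm{dec}_{\mathcal G}((v))=((v),\emptyset)$; for a walk $\omega$ with target $v$ and an edge $(v,v')$, let $(\pi,\Gamma)=\mathrm{dec}_{\mathcal G}(\omega)$ (the target of $\pi$ is $v$); if $v'\notin V(\pi)$ then $\mathrm{dec}_{\mathcal G}(\omega\odot(v,v'))=(\pi\odot(v,v'),\Gamma)$; otherwise, writing $\pi=(v_1,\ldots,v_{j-1},v',v_{j+1},\ldots,v)$, $\mathrm{dec}_{\mathcal G}(\omega\odot(v,v'))=((v_1,\ldots,v_{j-1},v'),\ \Gamma.(v',v_{j+1},\ldots,v,v'))$. Multi-trace: for $\omega\in\mathcal W(\mathcal G)$ with $(\pi_\omega,\Gamma)=\mathrm{dec}_{\mathcal G}(\omega)$, $\mathrm{mtr}(\omega):\mathcal P(\mathcal G)\cup\mathcal C(\mathcal G)\to\mathbb N$ is given by $\mathrm{mtr}(\omega)(\pi)=1$ if $\pi=\pi_\omega$ and $0$ for other paths $\pi$, and $\mathrm{mtr}(\omega)(\gamma)=|\Gamma|_\gamma$ for cycles $\gamma$. The trace of $\omega$ is $\mathrm{tr}(\omega)=\{x\in\mathcal P(\mathcal G)\cup\mathcal C(\mathcal G)\mid\mathrm{mtr}(\omega)(x)\neq0\}$; it contains exactly one path. The $N$-dimensional de Bruijn graph $\mathcal D_N=(A^N,E)$ has vertex set $A^N$ and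 edge set $E=\{(av,vb)\mid a,b\in A,\ v\in A^{N-1}\}$. $\mathrm{suf}(w;w_1,\ldots,w_k)=(c_1,\ldots,c_k)\in\mathbb N^k$ with $c_i=1$ if $w_i\in\mathrm{suff}(w)$ and $0$ otherwise; $\mathrm{occ}(w;w_1,\ldots,w_k)=(|w|_{w_1},\ldots,|w|_{w_k})$ for a word $w$; for a walk $\omega=(v_0,v_1,\ldots,v_n)$ in $\mathcal D_N$, $\mathrm{occ}(\omega;w_1,\ldots,w_k)=\sum_{i=1}^n\mathrm{suf}(v_i;w_1,\ldots,w_k)$ (zero vector if $n=0$). *)

theory Defs
  imports Main "HOL-Library.Sublist"
begin

text \<open>Words over the alphabet 'a are lists; the alphabet A is the (finite) type 'a.
  The words w_1..w_k are the list ws, indexed 0..k-1. Vectors in N^k are functions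
  nat => nat of which only the indices i < k matter.\<close>

definition nocc :: "'a list \<Rightarrow> 'a list \<Rightarrow> nat" where
  "nocc u w = card {(x, y). x @ u @ y = w}"

definition WMIX :: "'a list list \<Rightarrow> 'a list set" where
  "WMIX ws = {w. \<forall>i < length ws. \<forall>j < length ws. nocc (ws ! i) w = nocc (ws ! j) w}"

definition vdiff :: "nat \<Rightarrow> (nat \<Rightarrow> nat) \<Rightarrow> nat" where
  "vdiff k v = (\<Sum>i<k. Max (v ` {..<k}) - v i)"

definition db_edge :: "nat \<Rightarrow> 'a list \<Rightarrow> 'a list \<Rightarrow> bool" where
  "db_edge N u v = (\<exists>a b x. length x = N - 1 \<and> u = a # x \<and> v = x @ [b])"

definition is_walk :: "nat \<Rightarrow> 'a list list \<Rightarrow> bool" where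
  "is_walk N \<omega> = (\<omega> \<noteq> [] \<and> (\<forall>v \<in> set \<omega>. length v = N) \<and>
     (\<forall>i. Suc i < length \<omega> \<longrightarrow> db_edge N (\<omega> ! i) (\<omega> ! Suc i)))"

definition is_path :: "nat \<Rightarrow> 'a list list \<Rightarrow> bool" where
  "is_path N \<omega> = (is_walk N \<omega> \<and> distinct \<omega>)"

definition is_cycle :: "nat \<Rightarrow> 'a list list \<Rightarrow> bool" where
  "is_cycle N \<omega> = (is_walk N \<omega> \<and> length \<omega> \<ge> 2 \<and> hd \<omega> = last \<omega> \<and> distinct (butlast \<omega>))"

text \<open>Decomposition of a walk into a path and a sequence of cycles\<close>
definition dec_step :: "'v \<Rightarrow> 'v list \<times> 'v list list \<Rightarrow> 'v list \<times> 'v list list" where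
  "dec_step v' p = (let (\<pi>, \<Gamma>) = p in
     if v' \<notin> set \<pi> then (\<pi> @ [v'], \<Gamma>)
     else (takeWhile (\<lambda>x. x \<noteq> v') \<pi> @ [v'], \<Gamma> @ [dropWhile (\<lambda>x. x \<noteq> v') \<pi> @ [v']]))"

definition dec :: "'v list \<Rightarrow> 'v list \<times> 'v list list" where
  "dec \<omega> = fold dec_step (tl \<omega>) ([hd \<omega>], [])"

definition mtr :: "'v list \<Rightarrow> 'v list \<Rightarrow> nat" where
  "mtr \<omega> x = (if x = fst (dec \<omega>) then 1 else count_list (snd (dec \<omega>)) x)"

definition tr :: "'v list \<Rightarrow> 'v list set" where
  "tr \<omega> = {x. mtr \<omega> x \<noteq> 0}"

definition suf_vec :: "'a list list \<Rightarrow> 'a list \<Rightarrow> nat \<Rightarrow> nat" where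
  "suf_vec ws w i = (if i < length ws \<and> suffix (ws ! i) w then 1 else 0)"

definition occ_word :: "'a list list \<Rightarrow> 'a list \<Rightarrow> nat \<Rightarrow> nat" where
  "occ_word ws w i = (if i < length ws then nocc (ws ! i) w else 0)"

definition occ_walk :: "'a list list \<Rightarrow> 'a list list \<Rightarrow> nat \<Rightarrow> nat" where
  "occ_walk ws \<omega> i = (\<Sum>v \<leftarrow> tl \<omega>. suf_vec ws v i)"

end

theory Submission
  imports Defs Complex_Main
begin

text \<open>A word of length at least N is spelled by a walk in the de Bruijn graph D_N, and the
  number of occurrences of w_i in it is the count in the first vertex plus the number of later
  vertices having w_i as a suffix. This count is additive along the decomposition of the walk
  into its path and its cycles, so only the trace and the cycle multiplicities matter.

  If WMIX is infinite, infinitely many of its walks share one trace, because there are only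
  finitely many traces. By Dickson's lemma two of them have cycle multiplicities m \<le> m' with
  m \<noteq> m'; the first yields the balance condition and m' - m the pumping condition.

  Conversely, the cycles of a trace can be spliced back into its path one at a time, so for
  every t there is a walk traversing each cycle x + t y times. Its word lies in WMIX, and these
  words have pairwise different lengths.\<close>

section \<open>Walks in the de Bruijn graph and the words they spell\<close>

lemma is_walk_iff_successively:
  "is_walk N \<omega> \<longleftrightarrow> \<omega> \<noteq> [] \<and> (\<forall>v\<in>set \<omega>. length v = N) \<and> successively (db_edge N) \<omega>"
  unfolding is_walk_def successively_conv_nth by blast

lemma is_walk_append_iff:
  "\<omega>\<^sub>1 \<noteq> [] \<Longrightarrow> \<omega>\<^sub>2 \<noteq> [] \<Longrightarrow>
    is_walk N (\<omega>\<^sub>1 @ \<omega>\<^sub>2) \<longleftrightarrow> is_walk N \<omega>\<^sub>1 \<and> is_walk N \<omega>\<^sub>2 \<and> db_edge N (last \<omega>\<^sub>1) (hd \<omega>\<^sub>2)"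
  unfolding is_walk_iff_successively by (auto simp: successively_append_iff)

lemma is_walk_snoc_iff:
  "\<omega> \<noteq> [] \<Longrightarrow> is_walk N (\<omega> @ [v]) \<longleftrightarrow> is_walk N \<omega> \<and> length v = N \<and> db_edge N (last \<omega>) v"
  by (simp add: is_walk_append_iff) (simp add: is_walk_def)

lemma is_walk_appendD1: "is_walk N (\<omega>\<^sub>1 @ \<omega>\<^sub>2) \<Longrightarrow> \<omega>\<^sub>1 \<noteq> [] \<Longrightarrow> is_walk N \<omega>\<^sub>1"
  unfolding is_walk_iff_successively successively_append_iff by auto

lemma is_walk_appendD2: "is_walk N (\<omega>\<^sub>1 @ \<omega>\<^sub>2) \<Longrightarrow> \<omega>\<^sub>2 \<noteq> [] \<Longrightarrow> is_walk N \<omega>\<^sub>2"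
  unfolding is_walk_iff_successively successively_append_iff by auto

lemma db_edgeE:
  assumes "db_edge N u v"
  obtains a b x where "length x = N - 1" "u = a # x" "v = x @ [b]"
  using assms unfolding db_edge_def by blast

lemma suffix_snoc_db_edge:
  assumes "db_edge N u v" "suffix u w"
  shows "suffix v (w @ [last v])"
proof -
  from assms(1) obtain a b x where "u = a # x" "v = x @ [b]" by (rule db_edgeE)
  moreover from assms(2) obtain zs where "w = zs @ u" by (rule suffixE)
  ultimately have "w @ [last v] = (zs @ [a]) @ v" by simp
  then show ?thesis by (rule suffixI)
qed

definition walk_word :: "'a list list \<Rightarrow> 'a list" where
  "walk_word \<omega> = hd \<omega> @ map last (tl \<omega>)"

lemma walk_word_snoc: "\<omega> \<noteq> [] \<Longrightarrow> walk_word (\<omega> @ [v]) = walk_word \<omega> @ [last v]"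
  by (cases \<omega>) (auto simp: walk_word_def)

lemma length_walk_word: "is_walk N \<omega> \<Longrightarrow> length (walk_word \<omega>) = N + (length \<omega> - 1)"
  by (cases \<omega>) (auto simp: walk_word_def is_walk_def)

lemma suffix_last_walk_word: "is_walk N \<omega> \<Longrightarrow> suffix (last \<omega>) (walk_word \<omega>)"
proof (induction \<omega> rule: rev_induct)
  case (snoc v \<omega>)
  show ?case
  proof (cases "\<omega> = []")
    case True
    then show ?thesis by (simp add: walk_word_def)
  next
    case False
    with snoc.prems have "is_walk N \<omega>" and "db_edge N (last \<omega>) v"
      by (auto simp: is_walk_snoc_iff)
    then show ?thesis
      using snoc.IH False suffix_snoc_db_edge by (simp add: walk_word_snoc)
  qed
qed (simp add: is_walk_def)

lemma exists_walk_with_word: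
  assumes "N \<ge> 1" "length w \<ge> N"
  shows "\<exists>\<omega>. is_walk N \<omega> \<and> walk_word \<omega> = w"
  using assms(2)
proof (induction w rule: rev_induct)
  case (snoc b w)
  show ?case
  proof (cases "length w < N")
    case True
    then have "length (w @ [b]) = N" using snoc.prems by simp
    then show ?thesis by (intro exI[of _ "[w @ [b]]"]) (auto simp: is_walk_def walk_word_def)
  next
    case False
    then obtain \<omega> where \<omega>: "is_walk N \<omega>" "walk_word \<omega> = w" using snoc.IH by force
    then have "\<omega> \<noteq> []" and "length (last \<omega>) = N" by (auto simp: is_walk_def)
    moreover obtain a x where "last \<omega> = a # x"
      using \<open>length (last \<omega>) = N\<close> assms(1) by (cases "last \<omega>") auto
    ultimately have "is_walk N (\<omega> @ [x @ [b]])" and "walk_word (\<omega> @ [x @ [b]]) = w @ [b]"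
      using \<omega> by (auto simp: is_walk_snoc_iff db_edge_def walk_word_snoc)
    then show ?thesis by blast
  qed
qed (use assms in simp)

lemma infinite_walks_spelling:
  fixes L :: "'a::finite list set"
  assumes "N \<ge> 1" "infinite L"
  shows "infinite {\<omega>. is_walk N \<omega> \<and> walk_word \<omega> \<in> L}"
proof
  assume "finite {\<omega>. is_walk N \<omega> \<and> walk_word \<omega> \<in> L}"
  moreover have "L \<subseteq> walk_word ` {\<omega>. is_walk N \<omega> \<and> walk_word \<omega> \<in> L} \<union> {w. length w \<le> N}"
  proof
    fix w assume "w \<in> L"
    show "w \<in> walk_word ` {\<omega>. is_walk N \<omega> \<and> walk_word \<omega> \<in> L} \<union> {w. length w \<le> N}"
    proof (cases "N \<le> length w")
      case True
      then obtain \<omega> where "is_walk N \<omega>" "walk_word \<omega> = w"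
        using exists_walk_with_word[OF assms(1)] by blast
      then show ?thesis using \<open>w \<in> L\<close> by blast
    qed simp
  qed
  moreover have "finite {w :: 'a list. length w \<le> N}"
    using finite_lists_length_le[OF finite_UNIV, of N] by simp
  ultimately show False
    using assms(2) by (meson finite_Un finite_imageI finite_subset)
qed

section \<open>Counting occurrences along a walk\<close>

lemma finite_factorizations: "finite {(x, y). x @ u @ y = w}"
proof -
  have "{(x, y). x @ u @ y = w} \<subseteq> (\<lambda>i. (take i w, drop (i + length u) w)) ` {..length w}"
  proof
    fix p assume "p \<in> {(x, y). x @ u @ y = w}"
    then obtain x y where "p = (x, y)" "x @ u @ y = w" by blast
    then show "p \<in> (\<lambda>i. (take i w, drop (i + length u) w)) ` {..length w}"
      by (intro image_eqI[of _ _ "length x"]) auto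
  qed
  then show ?thesis by (rule finite_subset) simp
qed

lemma nocc_snoc: "nocc u (w @ [b]) = nocc u w + (if suffix u (w @ [b]) then 1 else 0)"
proof -
  define E :: "('a list \<times> 'a list) set" where "E = {(x, []) | x. x @ u = w @ [b]}"
  have split: "{(x, y). x @ u @ y = w @ [b]} = (\<lambda>(x, y). (x, y @ [b])) ` {(x, y). x @ u @ y = w} \<union> E"
  proof (intro set_eqI iffI)
    fix p assume "p \<in> {(x, y). x @ u @ y = w @ [b]}"
    then obtain x y where p: "p = (x, y)" "x @ u @ y = w @ [b]" by blast
    show "p \<in> (\<lambda>(x, y). (x, y @ [b])) ` {(x, y). x @ u @ y = w} \<union> E"
    proof (cases y rule: rev_cases)
      case (snoc y' c)
      then show ?thesis using p by (intro UnI1 image_eqI[of _ _ "(x, y')"]) auto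
    qed (use p in \<open>auto simp: E_def\<close>)
  qed (auto simp: E_def)
  have card_E: "card E = (if suffix u (w @ [b]) then 1 else 0)"
  proof (cases "suffix u (w @ [b])")
    case True
    then obtain z where "w @ [b] = z @ u" by (auto simp: suffix_def)
    then have "E = {(z, [])}" by (auto simp: E_def)
    then show ?thesis using True by simp
  next
    case False
    then have "E = {}" by (auto simp: E_def suffix_def dest: sym)
    then show ?thesis using False by simp
  qed
  have "finite E" using split finite_factorizations[of u "w @ [b]"] by (metis finite_Un)
  then have "nocc u (w @ [b]) = card ((\<lambda>(x, y). (x, y @ [b])) ` {(x, y). x @ u @ y = w}) + card E"
    unfolding nocc_def[of u "w @ [b]"] split
    by (intro card_Un_disjoint) (auto simp: E_def finite_factorizations)
  also have "card ((\<lambda>(x, y). (x, y @ [b])) ` {(x, y). x @ u @ y = w}) = nocc u w"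
    unfolding nocc_def by (rule card_image) (auto simp: inj_on_def)
  finally show ?thesis unfolding card_E .
qed

lemma nocc_walk_word:
  assumes "is_walk N \<omega>" "length u \<le> N"
  shows "nocc u (walk_word \<omega>) = nocc u (hd \<omega>) + (\<Sum>v\<leftarrow>tl \<omega>. if suffix u v then 1 else 0)"
  using assms(1)
proof (induction \<omega> rule: rev_induct)
  case (snoc v \<omega>)
  show ?case
  proof (cases "\<omega> = []")
    case True
    then show ?thesis by (simp add: walk_word_def)
  next
    case False
    with snoc.prems have \<omega>: "is_walk N \<omega>" and "db_edge N (last \<omega>) v" and "length v = N"
      by (auto simp: is_walk_snoc_iff)
    have v: "suffix v (walk_word \<omega> @ [last v])"
      using suffix_snoc_db_edge[OF \<open>db_edge N (last \<omega>) v\<close> suffix_last_walk_word[OF \<omega>]] .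
    \<comment> \<open>an occurrence of u ending at the new letter lies inside the last vertex, as |u| \<le> N\<close>
    have suffix_iff: "suffix u (walk_word \<omega> @ [last v]) \<longleftrightarrow> suffix u v"
    proof
      assume "suffix u (walk_word \<omega> @ [last v])"
      then show "suffix u v"
        using suffix_length_suffix[OF _ v] \<open>length v = N\<close> assms(2) by blast
    qed (use v suffix_order.order_trans in blast)
    have "nocc u (walk_word (\<omega> @ [v])) = nocc u (walk_word \<omega> @ [last v])"
      using False by (simp add: walk_word_snoc)
    also have "\<dots> = nocc u (walk_word \<omega>) + (if suffix u v then 1 else 0)"
      by (simp only: nocc_snoc suffix_iff)
    finally show ?thesis
      using snoc.IH[OF \<omega>] False by simp
  qed
qed (simp add: is_walk_def)

lemma nocc_walk_word_eq_occ:
  assumes "is_walk N \<omega>" "i < length ws" "length (ws ! i) \<le> N"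
  shows "nocc (ws ! i) (walk_word \<omega>) = occ_word ws (hd \<omega>) i + occ_walk ws \<omega> i"
  using nocc_walk_word[OF assms(1,3)] assms(2)
  by (simp add: occ_word_def occ_walk_def suf_vec_def)

lemma vdiff_eq_0_iff: "vdiff k v = 0 \<longleftrightarrow> (\<forall>i<k. \<forall>j<k. v i = v j)"
proof -
  have "vdiff k v = 0 \<longleftrightarrow> (\<forall>i<k. Max (v ` {..<k}) \<le> v i)"
    by (auto simp: vdiff_def)
  also have "\<dots> \<longleftrightarrow> (\<forall>i<k. \<forall>j<k. v i = v j)"
  proof (cases "k = 0")
    case False
    then have "Max (v ` {..<k}) \<in> v ` {..<k}" by (intro Max_in) auto
    then obtain j where "j < k" "Max (v ` {..<k}) = v j" by auto
    then show ?thesis by (metis Max_ge finite_imageI finite_lessThan image_eqI lessThan_iff le_antisym)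
  qed simp
  finally show ?thesis .
qed

lemma walk_word_in_WMIX_iff:
  assumes "is_walk N \<omega>" "\<forall>w\<in>set ws. length w \<le> N"
  shows "walk_word \<omega> \<in> WMIX ws \<longleftrightarrow>
    vdiff (length ws) (\<lambda>i. occ_word ws (hd \<omega>) i + occ_walk ws \<omega> i) = 0"
  using nocc_walk_word_eq_occ[OF assms(1)] assms(2)
  by (simp add: WMIX_def vdiff_eq_0_iff)

section \<open>Decomposition of a walk into a path and cycles\<close>

definition walk_weight :: "('v \<Rightarrow> nat) \<Rightarrow> 'v list \<Rightarrow> nat" where
  "walk_weight f \<omega> = (\<Sum>v\<leftarrow>tl \<omega>. f v)"

lemma walk_weight_snoc: "\<omega> \<noteq> [] \<Longrightarrow> walk_weight f (\<omega> @ [v]) = walk_weight f \<omega> + f v"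
  by (cases \<omega>) (auto simp: walk_weight_def)

lemma walk_weight_const_1: "walk_weight (\<lambda>_. 1) \<omega> = length \<omega> - 1"
  by (simp add: walk_weight_def sum_list_triv)

lemma occ_walk_eq_walk_weight: "occ_walk ws \<omega> i = walk_weight (\<lambda>v. suf_vec ws v i) \<omega>"
  by (simp add: occ_walk_def walk_weight_def)

text \<open>The cycles of C can be spliced into the walk \<pi> one at a time: whatever has been
  spliced in so far, some remaining cycle touches it.\<close>

definition cycles_attached :: "'v list \<Rightarrow> 'v list set \<Rightarrow> bool" where
  "cycles_attached \<pi> C \<longleftrightarrow>
     (\<forall>D\<subset>C. \<exists>\<gamma>\<in>C - D. \<exists>v\<in>set \<gamma>. v \<in> set \<pi> \<or> (\<exists>\<delta>\<in>D. v \<in> set \<delta>))"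

lemma cycles_attachedD:
  "cycles_attached \<pi> C \<Longrightarrow> D \<subset> C \<Longrightarrow> \<exists>\<gamma>\<in>C - D. \<exists>v\<in>set \<gamma>. v \<in> set \<pi> \<or> (\<exists>\<delta>\<in>D. v \<in> set \<delta>)"
  unfolding cycles_attached_def by blast

lemma cycles_attached_mono:
  "cycles_attached \<pi> C \<Longrightarrow> set \<pi> \<subseteq> set \<pi>' \<Longrightarrow> cycles_attached \<pi>' C"
  unfolding cycles_attached_def by (meson subsetD)

lemma cycles_attached_insert:
  assumes "cycles_attached \<pi> C" "set \<pi> \<subseteq> set \<pi>' \<union> set \<gamma>" "set \<gamma> \<inter> set \<pi>' \<noteq> {}"
  shows "cycles_attached \<pi>' (insert \<gamma> C)"
  unfolding cycles_attached_def
proof (intro allI impI)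
  fix D assume D: "D \<subset> insert \<gamma> C"
  show "\<exists>\<gamma>'\<in>insert \<gamma> C - D. \<exists>v\<in>set \<gamma>'. v \<in> set \<pi>' \<or> (\<exists>\<delta>\<in>D. v \<in> set \<delta>)"
  proof (cases "\<gamma> \<in> D")
    case True
    with D have "D \<inter> C \<subset> C" by auto
    from cycles_attachedD[OF assms(1) this] obtain \<gamma>' v where
      "\<gamma>' \<in> C - D \<inter> C" "v \<in> set \<gamma>'" "v \<in> set \<pi> \<or> (\<exists>\<delta>\<in>D \<inter> C. v \<in> set \<delta>)"
      by blast
    moreover from this(3) have "v \<in> set \<pi>' \<or> (\<exists>\<delta>\<in>D. v \<in> set \<delta>)"
      using assms(2) True by blast
    ultimately show ?thesis by blast
  next
    case False
    moreover obtain v where "v \<in> set \<gamma>" "v \<in> set \<pi>'" using assms(3) by blast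
    ultimately show ?thesis by blast
  qed
qed

definition is_decomposition :: "nat \<Rightarrow> 'a list list \<Rightarrow> 'a list list \<times> 'a list list list \<Rightarrow> bool" where
  "is_decomposition N \<omega> p \<longleftrightarrow> (case p of (\<pi>, \<Gamma>) \<Rightarrow>
     is_path N \<pi> \<and> hd \<pi> = hd \<omega> \<and> last \<pi> = last \<omega> \<and> (\<forall>\<gamma>\<in>set \<Gamma>. is_cycle N \<gamma>) \<and>
     (\<forall>f. walk_weight f \<omega> = walk_weight f \<pi> + (\<Sum>\<gamma>\<leftarrow>\<Gamma>. walk_weight f \<gamma>)) \<and>
     cycles_attached \<pi> (set \<Gamma>))"

lemma is_decomposition_dec_step:
  assumes dec: "is_decomposition N \<omega> (\<pi>, \<Gamma>)" and "\<omega> \<noteq> []" and walk: "is_walk N (\<omega> @ [v])"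
  shows "is_decomposition N (\<omega> @ [v]) (dec_step v (\<pi>, \<Gamma>))"
proof -
  have \<pi>: "is_walk N \<pi>" "distinct \<pi>" "hd \<pi> = hd \<omega>" "last \<pi> = last \<omega>" "\<forall>\<gamma>\<in>set \<Gamma>. is_cycle N \<gamma>"
    and weight: "\<And>f. walk_weight f \<omega> = walk_weight f \<pi> + (\<Sum>\<gamma>\<leftarrow>\<Gamma>. walk_weight f \<gamma>)"
    and attached: "cycles_attached \<pi> (set \<Gamma>)"
    using dec by (auto simp: is_decomposition_def is_path_def)
  have "\<pi> \<noteq> []" using \<pi>(1) by (simp add: is_walk_def)
  have edge: "db_edge N (last \<pi>) v" and "length v = N"
    using walk \<pi>(4) \<open>\<omega> \<noteq> []\<close> by (auto simp: is_walk_snoc_iff)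
  show ?thesis
  proof (cases "v \<in> set \<pi>")
    case False
    have "cycles_attached (\<pi> @ [v]) (set \<Gamma>)" by (rule cycles_attached_mono[OF attached]) auto
    with False show ?thesis
      using \<pi> edge \<open>length v = N\<close> \<open>\<pi> \<noteq> []\<close> \<open>\<omega> \<noteq> []\<close> weight
      by (simp add: dec_step_def is_decomposition_def is_path_def is_walk_snoc_iff walk_weight_snoc)
  next
    case True
    then obtain ys zs where \<pi>_split: "\<pi> = ys @ v # zs" "v \<notin> set ys"
      using split_list_first by metis
    have "takeWhile (\<lambda>x. x \<noteq> v) (ys @ v # zs) = ys" "dropWhile (\<lambda>x. x \<noteq> v) (ys @ v # zs) = v # zs"
      using \<pi>_split(2) by (induction ys) auto
    with True have step: "dec_step v (\<pi>, \<Gamma>) = (ys @ [v], \<Gamma> @ [v # zs @ [v]])"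
      by (simp add: dec_step_def \<pi>_split(1))
    have "is_walk N (ys @ [v])" "is_walk N (v # zs)"
      using \<pi>(1) \<pi>_split is_walk_appendD1[of N "ys @ [v]" zs] is_walk_appendD2[of N ys "v # zs"]
      by auto
    moreover have "last (v # zs) = last \<pi>" using \<pi>_split by simp
    ultimately have "is_path N (ys @ [v])" "is_cycle N (v # zs @ [v])"
      using \<pi>(2) \<pi>_split edge \<open>length v = N\<close> is_walk_snoc_iff[of "v # zs" N v]
      by (auto simp: is_path_def is_cycle_def)
    moreover have "hd (ys @ [v]) = hd \<omega>" using \<pi>(3) \<pi>_split by (cases ys) auto
    moreover have "walk_weight f (\<omega> @ [v]) =
        walk_weight f (ys @ [v]) + (\<Sum>\<gamma>\<leftarrow>\<Gamma> @ [v # zs @ [v]]. walk_weight f \<gamma>)" for f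
      using weight[of f] \<pi>_split \<open>\<omega> \<noteq> []\<close>
      by (cases ys) (simp_all add: walk_weight_snoc walk_weight_def)
    moreover have "cycles_attached (ys @ [v]) (set (\<Gamma> @ [v # zs @ [v]]))"
      using cycles_attached_insert[OF attached, of "ys @ [v]" "v # zs @ [v]"] \<pi>_split by auto
    ultimately show ?thesis
      using \<pi>(5) \<open>\<omega> \<noteq> []\<close> by (simp add: step is_decomposition_def)
  qed
qed

lemma dec_snoc: "\<omega> \<noteq> [] \<Longrightarrow> dec (\<omega> @ [v]) = dec_step v (dec \<omega>)"
  by (cases \<omega>) (auto simp: dec_def)

lemma is_decomposition_dec: "is_walk N \<omega> \<Longrightarrow> is_decomposition N \<omega> (dec \<omega>)"
proof (induction \<omega> rule: rev_induct)
  case (snoc v \<omega>)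
  show ?case
  proof (cases "\<omega> = []")
    case True
    with snoc.prems show ?thesis
      by (simp add: dec_def is_decomposition_def is_path_def walk_weight_def cycles_attached_def)
  next
    case False
    with snoc have "is_decomposition N \<omega> (dec \<omega>)" by (simp add: is_walk_snoc_iff)
    with False snoc.prems show ?thesis
      using is_decomposition_dec_step[of N \<omega> "fst (dec \<omega>)" "snd (dec \<omega>)" v] by (simp add: dec_snoc)
  qed
qed (simp add: is_walk_def)

lemma hd_fst_dec: "is_walk N \<omega> \<Longrightarrow> hd (fst (dec \<omega>)) = hd \<omega>"
  using is_decomposition_dec[of N \<omega>] by (auto simp: is_decomposition_def split: prod.splits)

lemma is_path_fst_dec: "is_walk N \<omega> \<Longrightarrow> is_path N (fst (dec \<omega>))"
  using is_decomposition_dec[of N \<omega>] by (auto simp: is_decomposition_def split: prod.splits)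

lemma is_cycle_snd_dec: "is_walk N \<omega> \<Longrightarrow> \<gamma> \<in> set (snd (dec \<omega>)) \<Longrightarrow> is_cycle N \<gamma>"
  using is_decomposition_dec[of N \<omega>] by (auto simp: is_decomposition_def split: prod.splits)

lemma cycles_attached_dec: "is_walk N \<omega> \<Longrightarrow> cycles_attached (fst (dec \<omega>)) (set (snd (dec \<omega>)))"
  using is_decomposition_dec[of N \<omega>] by (auto simp: is_decomposition_def split: prod.splits)

lemma walk_weight_dec:
  assumes "is_walk N \<omega>"
  shows "walk_weight f \<omega> = walk_weight f (fst (dec \<omega>)) +
    (\<Sum>\<gamma>\<in>set (snd (dec \<omega>)). count_list (snd (dec \<omega>)) \<gamma> * walk_weight f \<gamma>)"
  using is_decomposition_dec[OF assms]
  by (auto simp: is_decomposition_def sum_list_map_eq_sum_count split: prod.splits)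

lemma not_distinct_if_cycle:
  assumes "is_cycle N \<gamma>"
  shows "\<not> distinct \<gamma>"
proof -
  from assms obtain ys y where "\<gamma> = ys @ [y]" "ys \<noteq> []" "hd ys = y"
    by (cases \<gamma> rule: rev_cases) (auto simp: is_cycle_def hd_append split: if_splits)
  then show ?thesis by auto
qed

lemma tr_eq_dec: "tr \<omega> = insert (fst (dec \<omega>)) (set (snd (dec \<omega>)))"
  unfolding tr_def mtr_def by (auto simp: count_list_0_iff simp flip: neq0_conv)

lemma path_in_tr_iff:
  assumes "is_walk N \<omega>"
  shows "\<pi> \<in> tr \<omega> \<and> is_path N \<pi> \<longleftrightarrow> \<pi> = fst (dec \<omega>)"
  using is_path_fst_dec[OF assms] is_cycle_snd_dec[OF assms] not_distinct_if_cycle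
  by (auto simp: tr_eq_dec is_path_def)

lemma tr_minus_path: "is_walk N \<omega> \<Longrightarrow> tr \<omega> - {fst (dec \<omega>)} = set (snd (dec \<omega>))"
  using is_path_fst_dec is_cycle_snd_dec not_distinct_if_cycle
  by (fastforce simp: tr_eq_dec is_path_def)

lemma finite_walks_length_le: "finite {\<omega> :: 'a::finite list list. is_walk N \<omega> \<and> length \<omega> \<le> L}"
proof -
  have "finite {v :: 'a list. length v = N}"
    using finite_lists_length_eq[of "UNIV :: 'a set" N] by simp
  then have "finite {\<omega>. set \<omega> \<subseteq> {v :: 'a list. length v = N} \<and> length \<omega> \<le> L}"
    by (rule finite_lists_length_le)
  then show ?thesis by (rule finite_subset[rotated]) (auto simp: is_walk_def)
qed

lemma length_le_if_distinct_vertices: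
  fixes \<omega> :: "'a::finite list list"
  assumes "is_walk N \<omega>" "distinct xs" "set xs \<subseteq> set \<omega>"
  shows "length xs \<le> card {v :: 'a list. length v = N}"
proof -
  have "length xs = card (set xs)" using assms(2) by (simp add: distinct_card)
  also have "\<dots> \<le> card {v :: 'a list. length v = N}"
    using assms(1,3) finite_lists_length_eq[of "UNIV :: 'a set" N]
    by (intro card_mono) (auto simp: is_walk_def)
  finally show ?thesis .
qed

lemma finite_range_dec:
  "finite ((\<lambda>\<omega>. (fst (dec \<omega>), set (snd (dec \<omega>)))) ` {\<omega> :: 'a::finite list list. is_walk N \<omega>})"
proof -
  define B where "B = {\<omega> :: 'a list list. is_walk N \<omega> \<and> length \<omega> \<le> Suc (card {v :: 'a list. length v = N})}"
  have "fst (dec \<omega>) \<in> B" if "is_walk N \<omega>" for \<omega>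
    using is_path_fst_dec[OF that] length_le_if_distinct_vertices[of N "fst (dec \<omega>)"]
    by (force simp: B_def is_path_def)
  moreover have "\<gamma> \<in> B" if "is_cycle N \<gamma>" for \<gamma>
    using that length_le_if_distinct_vertices[of N \<gamma> "butlast \<gamma>"] in_set_butlastD
    by (force simp: B_def is_cycle_def)
  ultimately have "(\<lambda>\<omega>. (fst (dec \<omega>), set (snd (dec \<omega>)))) ` {\<omega>. is_walk N \<omega>} \<subseteq> B \<times> Pow B"
    using is_cycle_snd_dec by blast
  moreover have "finite B" unfolding B_def by (rule finite_walks_length_le)
  ultimately show ?thesis by (meson finite_Pow_iff finite_SigmaI finite_subset)
qed

section \<open>Splicing cycles into a walk\<close>

definition join_walks :: "'v list \<Rightarrow> 'v list \<Rightarrow> 'v list" where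
  "join_walks \<omega>\<^sub>1 \<omega>\<^sub>2 = \<omega>\<^sub>1 @ tl \<omega>\<^sub>2"

lemma join_walks:
  assumes "is_walk N \<omega>\<^sub>1" "is_walk N \<omega>\<^sub>2" "last \<omega>\<^sub>1 = hd \<omega>\<^sub>2"
  shows "is_walk N (join_walks \<omega>\<^sub>1 \<omega>\<^sub>2)" "hd (join_walks \<omega>\<^sub>1 \<omega>\<^sub>2) = hd \<omega>\<^sub>1"
    "last (join_walks \<omega>\<^sub>1 \<omega>\<^sub>2) = last \<omega>\<^sub>2" "set (join_walks \<omega>\<^sub>1 \<omega>\<^sub>2) = set \<omega>\<^sub>1 \<union> set \<omega>\<^sub>2"
    "walk_weight f (join_walks \<omega>\<^sub>1 \<omega>\<^sub>2) = walk_weight f \<omega>\<^sub>1 + walk_weight f \<omega>\<^sub>2"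
proof -
  have "\<omega>\<^sub>1 \<noteq> []" "\<omega>\<^sub>2 \<noteq> []" using assms(1,2) by (auto simp: is_walk_def)
  then obtain v \<omega> where \<omega>\<^sub>2: "\<omega>\<^sub>2 = v # \<omega>" by (cases \<omega>\<^sub>2) auto
  show "is_walk N (join_walks \<omega>\<^sub>1 \<omega>\<^sub>2)"
  proof (cases "\<omega> = []")
    case False
    then have "is_walk N \<omega>" "db_edge N v (hd \<omega>)"
      using assms(2) \<omega>\<^sub>2 is_walk_append_iff[of "[v]" \<omega> N] by auto
    then show ?thesis
      using assms \<omega>\<^sub>2 False \<open>\<omega>\<^sub>1 \<noteq> []\<close> by (simp add: join_walks_def is_walk_append_iff)
  qed (use assms(1) \<omega>\<^sub>2 in \<open>simp add: join_walks_def\<close>)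
  show "hd (join_walks \<omega>\<^sub>1 \<omega>\<^sub>2) = hd \<omega>\<^sub>1" "last (join_walks \<omega>\<^sub>1 \<omega>\<^sub>2) = last \<omega>\<^sub>2"
    "set (join_walks \<omega>\<^sub>1 \<omega>\<^sub>2) = set \<omega>\<^sub>1 \<union> set \<omega>\<^sub>2"
    using assms(3) \<omega>\<^sub>2 \<open>\<omega>\<^sub>1 \<noteq> []\<close> by (auto simp: join_walks_def)
  show "walk_weight f (join_walks \<omega>\<^sub>1 \<omega>\<^sub>2) = walk_weight f \<omega>\<^sub>1 + walk_weight f \<omega>\<^sub>2"
    using \<omega>\<^sub>2 \<open>\<omega>\<^sub>1 \<noteq> []\<close> by (cases \<omega>\<^sub>1) (auto simp: join_walks_def walk_weight_def)
qed

lemma rotate_closed_walk: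
  assumes "is_walk N \<gamma>" "hd \<gamma> = last \<gamma>" "u \<in> set \<gamma>"
  obtains \<rho> where "is_walk N \<rho>" "hd \<rho> = u" "last \<rho> = u" "set \<rho> = set \<gamma>"
    "\<And>f. walk_weight f \<rho> = walk_weight f \<gamma>"
proof -
  obtain \<gamma>\<^sub>1 \<gamma>\<^sub>2 where \<gamma>: "\<gamma> = \<gamma>\<^sub>1 @ u # \<gamma>\<^sub>2" using split_list[OF assms(3)] by blast
  show ?thesis
  proof (cases "\<gamma>\<^sub>1 = []")
    case False
    have "is_walk N (u # \<gamma>\<^sub>2)" "is_walk N (\<gamma>\<^sub>1 @ [u])"
      using assms(1) \<gamma> is_walk_appendD1[of N "\<gamma>\<^sub>1 @ [u]" \<gamma>\<^sub>2] is_walk_appendD2[of N \<gamma>\<^sub>1 "u # \<gamma>\<^sub>2"]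
      by auto
    moreover have "last (u # \<gamma>\<^sub>2) = hd (\<gamma>\<^sub>1 @ [u])" using assms(2) \<gamma> False by (cases \<gamma>\<^sub>2) auto
    moreover have "walk_weight f (u # \<gamma>\<^sub>2) + walk_weight f (\<gamma>\<^sub>1 @ [u]) = walk_weight f \<gamma>" for f
      using \<gamma> False by (cases \<gamma>\<^sub>1) (auto simp: walk_weight_def)
    ultimately show ?thesis
      using join_walks[of N "u # \<gamma>\<^sub>2" "\<gamma>\<^sub>1 @ [u]"] that[of "join_walks (u # \<gamma>\<^sub>2) (\<gamma>\<^sub>1 @ [u])"] \<gamma>
      by auto
  qed (use assms \<gamma> that in auto)
qed

lemma splice_closed_walk:
  assumes "is_walk N W" "is_walk N \<gamma>" "hd \<gamma> = last \<gamma>" "u \<in> set W" "u \<in> set \<gamma>"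
  obtains W' where "is_walk N W'" "hd W' = hd W" "set W' = set W \<union> set \<gamma>"
    "\<And>f. walk_weight f W' = walk_weight f W + walk_weight f \<gamma>"
proof -
  obtain \<rho> where \<rho>: "is_walk N \<rho>" "hd \<rho> = u" "last \<rho> = u" "set \<rho> = set \<gamma>"
    "\<And>f. walk_weight f \<rho> = walk_weight f \<gamma>"
    using rotate_closed_walk[OF assms(2,3,5)] by blast
  obtain W\<^sub>1 W\<^sub>2 where W: "W = W\<^sub>1 @ u # W\<^sub>2" using split_list[OF assms(4)] by blast
  have W\<^sub>1: "is_walk N (W\<^sub>1 @ [u])" and W\<^sub>2: "is_walk N (u # W\<^sub>2)"
    using assms(1) W is_walk_appendD1[of N "W\<^sub>1 @ [u]" W\<^sub>2] is_walk_appendD2[of N W\<^sub>1 "u # W\<^sub>2"]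
    by auto
  have "W = join_walks (W\<^sub>1 @ [u]) (u # W\<^sub>2)" using W by (simp add: join_walks_def)
  moreover note first = join_walks[OF W\<^sub>1 \<rho>(1)]
  moreover note join_walks[OF first(1) W\<^sub>2] join_walks[OF W\<^sub>1 W\<^sub>2]
  ultimately show ?thesis
    using \<rho> that[of "join_walks (join_walks (W\<^sub>1 @ [u]) \<rho>) (u # W\<^sub>2)"] by auto
qed

lemma splice_closed_walk_times:
  assumes "is_walk N W" "is_walk N \<gamma>" "hd \<gamma> = last \<gamma>" "u \<in> set W" "u \<in> set \<gamma>" "k \<ge> 1"
  shows "\<exists>W'. is_walk N W' \<and> hd W' = hd W \<and> set W' = set W \<union> set \<gamma> \<and>
    (\<forall>f. walk_weight f W' = walk_weight f W + k * walk_weight f \<gamma>)"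
  using assms(6)
proof (induction k rule: dec_induct)
  case base
  show ?case using splice_closed_walk[OF assms(1-5)] by (metis mult_1)
next
  case (step k)
  then obtain W' where W': "is_walk N W'" "hd W' = hd W" "set W' = set W \<union> set \<gamma>"
    "\<forall>f. walk_weight f W' = walk_weight f W + k * walk_weight f \<gamma>" by blast
  moreover have "u \<in> set W'" using W'(3) assms(4) by simp
  then obtain W'' where "is_walk N W''" "hd W'' = hd W'" "set W'' = set W' \<union> set \<gamma>"
    "\<And>f. walk_weight f W'' = walk_weight f W' + walk_weight f \<gamma>"
    using splice_closed_walk[OF W'(1) assms(2,3) _ assms(5)] by metis
  ultimately show ?case by (intro exI[of _ W'']) auto
qed

lemma splice_attached_cycle:
  assumes "cycles_attached \<pi> C" "D \<subset> C" "\<forall>\<gamma>\<in>C. is_cycle N \<gamma>" "\<forall>\<gamma>\<in>C. 1 \<le> x \<gamma>"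
    and "is_walk N W" "set W = set \<pi> \<union> \<Union>(set ` D)"
  obtains \<gamma> W' where "\<gamma> \<in> C - D" "is_walk N W'" "hd W' = hd W" "set W' = set W \<union> set \<gamma>"
    "\<forall>f. walk_weight f W' = walk_weight f W + x \<gamma> * walk_weight f \<gamma>"
proof -
  obtain \<gamma> u where \<gamma>: "\<gamma> \<in> C - D" "u \<in> set \<gamma>" "u \<in> set \<pi> \<or> (\<exists>\<delta>\<in>D. u \<in> set \<delta>)"
    using cycles_attachedD[OF assms(1,2)] by blast
  then have "u \<in> set W" using assms(6) by blast
  moreover have "is_walk N \<gamma>" "hd \<gamma> = last \<gamma>" using assms(3) \<gamma>(1) by (auto simp: is_cycle_def)
  ultimately show ?thesis
    using splice_closed_walk_times[OF assms(5) _ _ _ \<gamma>(2), of "x \<gamma>"] assms(4) \<gamma>(1) that by blast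
qed

lemma exists_walk_with_cycle_multiplicities:
  assumes "finite C" "cycles_attached \<pi> C" "\<forall>\<gamma>\<in>C. is_cycle N \<gamma>" "is_walk N \<pi>" "\<forall>\<gamma>\<in>C. 1 \<le> x \<gamma>"
  obtains W where "is_walk N W" "hd W = hd \<pi>"
    "\<And>f. walk_weight f W = walk_weight f \<pi> + (\<Sum>\<gamma>\<in>C. x \<gamma> * walk_weight f \<gamma>)"
proof -
  have "\<exists>D\<subseteq>C. card D = n \<and> (\<exists>W. is_walk N W \<and> hd W = hd \<pi> \<and> set W = set \<pi> \<union> \<Union>(set ` D) \<and>
      (\<forall>f. walk_weight f W = walk_weight f \<pi> + (\<Sum>\<gamma>\<in>D. x \<gamma> * walk_weight f \<gamma>)))"
    if "n \<le> card C" for n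
    using that
  proof (induction n)
    case 0
    show ?case using assms(4) by (intro exI[of _ "{}"]) auto
  next
    case (Suc n)
    then obtain D W where D: "D \<subseteq> C" "card D = n" and W: "is_walk N W" "hd W = hd \<pi>"
      "set W = set \<pi> \<union> \<Union>(set ` D)"
      "\<forall>f. walk_weight f W = walk_weight f \<pi> + (\<Sum>\<gamma>\<in>D. x \<gamma> * walk_weight f \<gamma>)"
      by auto
    have "D \<subset> C" using D Suc.prems by auto
    obtain \<gamma> W' where "\<gamma> \<in> C - D" "is_walk N W'" "hd W' = hd W" "set W' = set W \<union> set \<gamma>"
      "\<forall>f. walk_weight f W' = walk_weight f W + x \<gamma> * walk_weight f \<gamma>"
      by (rule splice_attached_cycle[OF assms(2) \<open>D \<subset> C\<close> assms(3,5) W(1,3)])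
    moreover have "finite D" using D(1) assms(1) by (rule finite_subset)
    ultimately show ?case
      using D W by (intro exI[of _ "insert \<gamma> D"] conjI exI[of _ W']) (auto simp: add.assoc)
  qed
  from this[OF order_refl] obtain D W where "D \<subseteq> C" "card D = card C" "is_walk N W" "hd W = hd \<pi>"
    "\<forall>f. walk_weight f W = walk_weight f \<pi> + (\<Sum>\<gamma>\<in>D. x \<gamma> * walk_weight f \<gamma>)"
    by blast
  moreover from this(1,2) have "D = C" using assms(1) card_subset_eq by blast
  ultimately show ?thesis by (intro that[of W]) auto
qed

section \<open>Dickson's lemma\<close>

lemma nat_seq_mono_subseq:
  fixes a :: "nat \<Rightarrow> nat"
  obtains \<tau> :: "nat \<Rightarrow> nat" where "strict_mono \<tau>" "mono (a \<circ> \<tau>)"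
proof -
  obtain f where f: "strict_mono f" "monoseq (\<lambda>n. a (f n))" using seq_monosub by blast
  show ?thesis
  proof (cases "incseq (\<lambda>n. a (f n))")
    case True
    then show ?thesis by (intro that[OF f(1)]) (simp add: comp_def incseq_def mono_def)
  next
    case False
    \<comment> \<open>a non-increasing sequence of naturals is constant from its minimum on\<close>
    with f(2) have anti: "decseq (\<lambda>n. a (f n))" by (simp add: monoseq_iff)
    obtain K where K: "\<And>n. a (f K) \<le> a (f n)"
      using ex_has_least_nat[of "\<lambda>_. True" 0 "\<lambda>n. a (f n)"] by blast
    have "a (f (n + K)) = a (f K)" for n
      using K[of "n + K"] anti by (auto intro: le_antisym simp: decseq_def)
    then have "mono (a \<circ> (\<lambda>n. f (n + K)))" by (simp add: mono_def comp_def)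
    moreover have "strict_mono (\<lambda>n. f (n + K))" using f(1) by (simp add: strict_mono_def)
    ultimately show ?thesis using that by blast
  qed
qed

lemma finite_family_mono_subseq:
  fixes s :: "nat \<Rightarrow> 'c \<Rightarrow> nat"
  assumes "finite C"
  obtains \<sigma> :: "nat \<Rightarrow> nat" where "strict_mono \<sigma>" "\<And>i j c. i \<le> j \<Longrightarrow> c \<in> C \<Longrightarrow> s (\<sigma> i) c \<le> s (\<sigma> j) c"
  using assms
proof (induction C arbitrary: thesis rule: finite_induct)
  case empty
  show ?case using empty(1)[of id] by (simp add: strict_mono_def)
next
  case (insert c C)
  obtain \<sigma> :: "nat \<Rightarrow> nat" where
    \<sigma>: "strict_mono \<sigma>" "\<And>i j d. i \<le> j \<Longrightarrow> d \<in> C \<Longrightarrow> s (\<sigma> i) d \<le> s (\<sigma> j) d"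
    by (rule insert.IH) blast
  obtain \<tau> :: "nat \<Rightarrow> nat" where \<tau>: "strict_mono \<tau>" "mono ((\<lambda>n. s (\<sigma> n) c) \<circ> \<tau>)"
    by (rule nat_seq_mono_subseq)
  show ?case
  proof (rule insert.prems)
    show "strict_mono (\<sigma> \<circ> \<tau>)" using \<sigma>(1) \<tau>(1) by (rule strict_mono_o)
    fix i j :: nat and d assume "i \<le> j" "d \<in> insert c C"
    show "s ((\<sigma> \<circ> \<tau>) i) d \<le> s ((\<sigma> \<circ> \<tau>) j) d"
    proof (cases "d = c")
      case True
      then show ?thesis using monoD[OF \<tau>(2) \<open>i \<le> j\<close>] by simp
    next
      case False
      have "\<tau> i \<le> \<tau> j" using \<tau>(1) \<open>i \<le> j\<close> by (simp add: strict_mono_less_eq)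
      with False show ?thesis using \<sigma>(2) \<open>d \<in> insert c C\<close> by simp
    qed
  qed
qed

lemma dickson_le_pair:
  fixes M :: "('c \<Rightarrow> nat) set"
  assumes "infinite M" "finite C" "\<And>h c. h \<in> M \<Longrightarrow> c \<notin> C \<Longrightarrow> h c = 0"
  obtains h\<^sub>1 h\<^sub>2 where "h\<^sub>1 \<in> M" "h\<^sub>2 \<in> M" "h\<^sub>1 \<noteq> h\<^sub>2" "h\<^sub>1 \<le> h\<^sub>2"
proof -
  obtain s :: "nat \<Rightarrow> 'c \<Rightarrow> nat" where s: "inj s" "range s \<subseteq> M"
    using assms(1) unfolding infinite_iff_countable_subset by blast
  obtain \<sigma> :: "nat \<Rightarrow> nat" where
    \<sigma>: "strict_mono \<sigma>" "\<And>i j c. i \<le> j \<Longrightarrow> c \<in> C \<Longrightarrow> s (\<sigma> i) c \<le> s (\<sigma> j) c"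
    by (rule finite_family_mono_subseq[OF assms(2), of s]) blast
  have "s (\<sigma> 0) \<noteq> s (\<sigma> 1)"
    using s(1) strict_mono_eq[OF \<sigma>(1), of 0 1] by (simp add: inj_eq)
  moreover have "s (\<sigma> 0) \<le> s (\<sigma> 1)"
  proof (rule le_funI)
    fix c
    show "s (\<sigma> 0) c \<le> s (\<sigma> 1) c"
      using \<sigma>(2)[of 0 1 c] assms(3)[of "s (\<sigma> 0)" c] s(2) by (cases "c \<in> C") (auto simp: image_subset_iff)
  qed
  ultimately show ?thesis using s(2) by (intro that[of "s (\<sigma> 0)" "s (\<sigma> 1)"]) auto
qed

lemma vdiff_add_mult_eq_0:
  assumes "vdiff k u = 0" "vdiff k v = 0"
  shows "vdiff k (\<lambda>i. u i + t * v i) = 0"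
  unfolding vdiff_eq_0_iff
proof (intro allI impI)
  fix i j assume "i < k" "j < k"
  with assms have "u i = u j" "v i = v j" unfolding vdiff_eq_0_iff by blast+
  then show "u i + t * v i = u j + t * v j" by simp
qed

lemma vdiff_add_cancel_eq_0:
  assumes "vdiff k u = 0" "vdiff k (\<lambda>i. u i + v i) = 0"
  shows "vdiff k v = 0"
  unfolding vdiff_eq_0_iff
proof (intro allI impI)
  fix i j assume "i < k" "j < k"
  with assms have "u i = u j" "u i + v i = u j + v j" unfolding vdiff_eq_0_iff by blast+
  then show "v i = v j" by simp
qed

lemma infinite_WMIX_if_pumpable:
  assumes lengths: "\<forall>w\<in>set ws. length w \<le> N"
    and \<pi>: "is_walk N \<pi>" and C: "finite C" "\<forall>\<gamma>\<in>C. is_cycle N \<gamma>" "cycles_attached \<pi> C"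
    and x: "\<forall>\<gamma>\<in>C. 1 \<le> x \<gamma>"
      "vdiff (length ws) (\<lambda>i. occ_word ws (hd \<pi>) i + occ_walk ws \<pi> i + (\<Sum>\<gamma>\<in>C. x \<gamma> * occ_walk ws \<gamma> i)) = 0"
    and y: "\<exists>\<gamma>\<in>C. y \<gamma> \<noteq> 0" "vdiff (length ws) (\<lambda>i. \<Sum>\<gamma>\<in>C. y \<gamma> * occ_walk ws \<gamma> i) = 0"
  shows "infinite (WMIX ws)"
proof -
  have "\<exists>W. is_walk N W \<and> hd W = hd \<pi> \<and>
      (\<forall>f. walk_weight f W = walk_weight f \<pi> + (\<Sum>\<gamma>\<in>C. (x \<gamma> + t * y \<gamma>) * walk_weight f \<gamma>))" for t
  proof -
    have "\<forall>\<gamma>\<in>C. 1 \<le> x \<gamma> + t * y \<gamma>" using x(1) by auto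
    then obtain W where "is_walk N W" "hd W = hd \<pi>"
      "\<And>f. walk_weight f W = walk_weight f \<pi> + (\<Sum>\<gamma>\<in>C. (x \<gamma> + t * y \<gamma>) * walk_weight f \<gamma>)"
      by (rule exists_walk_with_cycle_multiplicities[OF C(1,3,2) \<pi>]) blast
    then show ?thesis by blast
  qed
  then obtain W where W: "\<And>t. is_walk N (W t)" "\<And>t. hd (W t) = hd \<pi>"
    "\<And>t f. walk_weight f (W t) = walk_weight f \<pi> + (\<Sum>\<gamma>\<in>C. (x \<gamma> + t * y \<gamma>) * walk_weight f \<gamma>)"
    by metis
  have sum_split: "(\<Sum>\<gamma>\<in>C. (x \<gamma> + t * y \<gamma>) * g \<gamma>) = (\<Sum>\<gamma>\<in>C. x \<gamma> * g \<gamma>) + t * (\<Sum>\<gamma>\<in>C. y \<gamma> * g \<gamma>)"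
    for t and g :: "'a list list \<Rightarrow> nat"
    by (simp add: sum.distrib sum_distrib_left algebra_simps)
  have "walk_word (W t) \<in> WMIX ws" for t
    using vdiff_add_mult_eq_0[OF x(2) y(2), of t]
    by (simp add: walk_word_in_WMIX_iff[OF W(1) lengths] W(2,3) occ_walk_eq_walk_weight sum_split add.assoc)
  moreover have "inj (\<lambda>t. walk_word (W t))"
  proof -
    obtain \<gamma> where "\<gamma> \<in> C" "y \<gamma> \<noteq> 0" using y(1) by blast
    moreover from this(1) have "length \<gamma> \<ge> 2" using C(2) by (simp add: is_cycle_def)
    then have "walk_weight (\<lambda>_. 1) \<gamma> \<noteq> 0" unfolding walk_weight_const_1 by simp
    ultimately have growth: "(\<Sum>\<gamma>\<in>C. y \<gamma> * walk_weight (\<lambda>_. 1) \<gamma>) \<noteq> 0"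
      using C(1) by (auto simp: sum_eq_0_iff)
    have length: "length (walk_word (W t)) = N + walk_weight (\<lambda>_. 1) \<pi> + (\<Sum>\<gamma>\<in>C. x \<gamma> * walk_weight (\<lambda>_. 1) \<gamma>)
        + t * (\<Sum>\<gamma>\<in>C. y \<gamma> * walk_weight (\<lambda>_. 1) \<gamma>)" for t
      using length_walk_word[OF W(1)] W(3)[of "\<lambda>_. 1" t] walk_weight_const_1[of "W t"]
      by (simp add: sum_split)
    show ?thesis
    proof (rule injI)
      fix s t assume "walk_word (W s) = walk_word (W t)"
      then have "length (walk_word (W s)) = length (walk_word (W t))" by simp
      with growth show "s = t" unfolding length by simp
    qed
  qed
  ultimately show ?thesis
    using infinite_UNIV_nat by (metis finite_imageD finite_subset image_subsetI)
qed

lemma infinite_cycle_counts: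
  fixes F :: "'a::finite list list set"
  assumes "infinite F" "\<And>\<omega>. \<omega> \<in> F \<Longrightarrow> is_walk N \<omega> \<and> fst (dec \<omega>) = \<pi> \<and> set (snd (dec \<omega>)) = C"
  shows "infinite ((\<lambda>\<omega>. count_list (snd (dec \<omega>))) ` F)"
proof
  define len where "len = (\<lambda>m. Suc (walk_weight (\<lambda>_. 1) \<pi> + (\<Sum>\<gamma>\<in>C. m \<gamma> * walk_weight (\<lambda>_. 1) \<gamma>)))"
  assume "finite ((\<lambda>\<omega>. count_list (snd (dec \<omega>))) ` F)"
  \<comment> \<open>the cycle counts determine the length of a walk\<close>
  moreover have "length \<omega> = len (count_list (snd (dec \<omega>)))" if "\<omega> \<in> F" for \<omega>
    using assms(2)[OF that] walk_weight_dec[of N \<omega> "\<lambda>_. 1"] walk_weight_const_1[of \<omega>]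
    by (cases \<omega>) (auto simp: len_def is_walk_def)
  ultimately have "finite (length ` F)"
    by (metis (no_types, lifting) finite_imageI image_cong image_image)
  then obtain L where "\<forall>\<omega>\<in>F. length \<omega> \<le> L" by (auto simp: finite_nat_set_iff_bounded_le)
  then have "F \<subseteq> {\<omega>. is_walk N \<omega> \<and> length \<omega> \<le> L}" using assms(2) by blast
  then show False using assms(1) finite_walks_length_le finite_subset by blast
qed

lemma occ_dec:
  assumes "is_walk N \<omega>"
  shows "occ_word ws (hd \<omega>) i + occ_walk ws \<omega> i = occ_word ws (hd (fst (dec \<omega>))) i + occ_walk ws (fst (dec \<omega>)) i
    + (\<Sum>\<gamma>\<in>set (snd (dec \<omega>)). count_list (snd (dec \<omega>)) \<gamma> * occ_walk ws \<gamma> i)"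
  unfolding hd_fst_dec[OF assms] occ_walk_eq_walk_weight walk_weight_dec[OF assms] by (simp add: add.assoc)

lemma infinite_walks_with_common_trace:
  fixes L :: "'a::finite list set"
  assumes "N \<ge> 1" "infinite L"
  obtains F \<pi> C where "infinite F"
    "\<And>\<omega>. \<omega> \<in> F \<Longrightarrow> is_walk N \<omega> \<and> walk_word \<omega> \<in> L \<and> fst (dec \<omega>) = \<pi> \<and> set (snd (dec \<omega>)) = C"
proof -
  define S where "S = {\<omega>. is_walk N \<omega> \<and> walk_word \<omega> \<in> L}"
  define shape where "shape = (\<lambda>\<omega> :: 'a list list. (fst (dec \<omega>), set (snd (dec \<omega>))))"
  have "infinite S" unfolding S_def using infinite_walks_spelling assms by blast
  moreover have "finite (shape ` S)"
    using finite_range_dec[of N] unfolding shape_def S_def by (rule finite_subset[rotated]) blast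
  ultimately obtain \<omega>\<^sub>0 where "infinite {\<omega> \<in> S. shape \<omega> = shape \<omega>\<^sub>0}"
    using pigeonhole_infinite by blast
  then show ?thesis
    by (rule that[of _ "fst (dec \<omega>\<^sub>0)" "set (snd (dec \<omega>\<^sub>0))"]) (simp add: S_def shape_def)
qed

lemma cycle_counts_le_pair:
  fixes F :: "'a::finite list list set"
  assumes "infinite F" "\<And>\<omega>. \<omega> \<in> F \<Longrightarrow> is_walk N \<omega> \<and> fst (dec \<omega>) = \<pi> \<and> set (snd (dec \<omega>)) = C"
  obtains \<omega>\<^sub>1 \<omega>\<^sub>2 where "\<omega>\<^sub>1 \<in> F" "\<omega>\<^sub>2 \<in> F" "count_list (snd (dec \<omega>\<^sub>1)) \<le> count_list (snd (dec \<omega>\<^sub>2))"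
    "\<exists>\<gamma>\<in>C. count_list (snd (dec \<omega>\<^sub>1)) \<gamma> \<noteq> count_list (snd (dec \<omega>\<^sub>2)) \<gamma>"
proof -
  define m where "m = (\<lambda>\<omega> :: 'a list list. count_list (snd (dec \<omega>)))"
  have support: "h \<gamma> = 0" if "h \<in> m ` F" "\<gamma> \<notin> C" for h \<gamma>
    using that assms(2) by (auto simp: m_def count_list_0_iff)
  have "infinite (m ` F)" unfolding m_def by (rule infinite_cycle_counts[OF assms])
  moreover have "finite C"
    using assms infinite_imp_nonempty by (metis List.finite_set ex_in_conv)
  ultimately obtain h\<^sub>1 h\<^sub>2 where "h\<^sub>1 \<in> m ` F" "h\<^sub>2 \<in> m ` F" "h\<^sub>1 \<noteq> h\<^sub>2" "h\<^sub>1 \<le> h\<^sub>2"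
    using support by (rule dickson_le_pair)
  moreover from this(3) obtain \<gamma> where "h\<^sub>1 \<gamma> \<noteq> h\<^sub>2 \<gamma>" by blast
  moreover from calculation have "\<gamma> \<in> C"
    using support[of h\<^sub>1 \<gamma>] support[of h\<^sub>2 \<gamma>] by (cases "\<gamma> \<in> C") simp_all
  ultimately show ?thesis using that unfolding m_def by blast
qed

lemma pumpable_if_infinite_WMIX:
  fixes ws :: "'a::finite list list"
  assumes "N \<ge> 1" and lengths: "\<forall>w\<in>set ws. length w \<le> N" and "infinite (WMIX ws)"
  obtains \<omega> x y where "is_walk N \<omega>" "\<forall>\<gamma>\<in>set (snd (dec \<omega>)). 1 \<le> x \<gamma>"
    "vdiff (length ws) (\<lambda>i. occ_word ws (hd (fst (dec \<omega>))) i + occ_walk ws (fst (dec \<omega>)) i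
       + (\<Sum>\<gamma>\<in>set (snd (dec \<omega>)). x \<gamma> * occ_walk ws \<gamma> i)) = 0"
    "\<exists>\<gamma>\<in>set (snd (dec \<omega>)). y \<gamma> \<noteq> 0"
    "vdiff (length ws) (\<lambda>i. \<Sum>\<gamma>\<in>set (snd (dec \<omega>)). y \<gamma> * occ_walk ws \<gamma> i) = 0"
proof -
  obtain F \<pi> C where "infinite F" and F:
    "\<And>\<omega>. \<omega> \<in> F \<Longrightarrow> is_walk N \<omega> \<and> walk_word \<omega> \<in> WMIX ws \<and> fst (dec \<omega>) = \<pi> \<and> set (snd (dec \<omega>)) = C"
    by (rule infinite_walks_with_common_trace[OF assms(1,3)]) blast
  define m where "m = (\<lambda>\<omega> :: 'a list list. count_list (snd (dec \<omega>)))"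
  have balanced: "vdiff (length ws)
      (\<lambda>i. occ_word ws (hd \<pi>) i + occ_walk ws \<pi> i + (\<Sum>\<gamma>\<in>C. m \<omega> \<gamma> * occ_walk ws \<gamma> i)) = 0"
    if "\<omega> \<in> F" for \<omega>
    using walk_word_in_WMIX_iff[OF _ lengths, of \<omega>] occ_dec[of N \<omega> ws] F[OF that]
    by (simp add: m_def)
  obtain \<omega>\<^sub>1 \<omega>\<^sub>2 where \<omega>\<^sub>1\<^sub>2: "\<omega>\<^sub>1 \<in> F" "\<omega>\<^sub>2 \<in> F" "m \<omega>\<^sub>1 \<le> m \<omega>\<^sub>2" "\<exists>\<gamma>\<in>C. m \<omega>\<^sub>1 \<gamma> \<noteq> m \<omega>\<^sub>2 \<gamma>"
    using cycle_counts_le_pair[OF \<open>infinite F\<close>, of N \<pi> C] F unfolding m_def by blast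
  \<comment> \<open>the excess of cycle traversals of the longer walk is the pumping vector\<close>
  define y where "y = (\<lambda>\<gamma>. m \<omega>\<^sub>2 \<gamma> - m \<omega>\<^sub>1 \<gamma>)"
  have m\<^sub>2: "m \<omega>\<^sub>2 \<gamma> = m \<omega>\<^sub>1 \<gamma> + y \<gamma>" for \<gamma>
    using \<omega>\<^sub>1\<^sub>2(3) by (simp add: y_def le_fun_def)
  show ?thesis
  proof (rule that[of \<omega>\<^sub>1 "m \<omega>\<^sub>1" y])
    show "is_walk N \<omega>\<^sub>1" using F[OF \<omega>\<^sub>1\<^sub>2(1)] by simp
    show "\<forall>\<gamma>\<in>set (snd (dec \<omega>\<^sub>1)). 1 \<le> m \<omega>\<^sub>1 \<gamma>"
      by (auto simp: m_def Suc_le_eq count_list_0_iff simp flip: neq0_conv)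
    show "vdiff (length ws) (\<lambda>i. occ_word ws (hd (fst (dec \<omega>\<^sub>1))) i + occ_walk ws (fst (dec \<omega>\<^sub>1)) i
        + (\<Sum>\<gamma>\<in>set (snd (dec \<omega>\<^sub>1)). m \<omega>\<^sub>1 \<gamma> * occ_walk ws \<gamma> i)) = 0"
      using balanced[OF \<omega>\<^sub>1\<^sub>2(1)] F[OF \<omega>\<^sub>1\<^sub>2(1)] by simp
    show "\<exists>\<gamma>\<in>set (snd (dec \<omega>\<^sub>1)). y \<gamma> \<noteq> 0"
      using \<omega>\<^sub>1\<^sub>2(4) F[OF \<omega>\<^sub>1\<^sub>2(1)] m\<^sub>2 by auto
    show "vdiff (length ws) (\<lambda>i. \<Sum>\<gamma>\<in>set (snd (dec \<omega>\<^sub>1)). y \<gamma> * occ_walk ws \<gamma> i) = 0"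
      using vdiff_add_cancel_eq_0[OF balanced[OF \<omega>\<^sub>1\<^sub>2(1)]] balanced[OF \<omega>\<^sub>1\<^sub>2(2)] F[OF \<omega>\<^sub>1\<^sub>2(1)]
      by (simp add: m\<^sub>2 algebra_simps sum.distrib)
  qed
qed

theorem theorem1:
  fixes ws :: "('a::finite) list list" and N :: nat
  assumes "ws \<noteq> []"
    and "N = Max (length ` set ws)"
    and "N \<ge> 1"
  shows "infinite (WMIX ws) \<longleftrightarrow>
    (\<exists>\<omega> \<pi>. is_walk N \<omega> \<and> \<pi> \<in> tr \<omega> \<and> is_path N \<pi> \<and>
       (let C = tr \<omega> - {\<pi>}; k = length ws in
         (\<exists>x :: 'a list list \<Rightarrow> nat. (\<forall>\<gamma>\<in>C. x \<gamma> \<ge> 1) \<and>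
            vdiff k (\<lambda>i. occ_word ws (hd \<pi>) i + occ_walk ws \<pi> i
                        + (\<Sum>\<gamma>\<in>C. x \<gamma> * occ_walk ws \<gamma> i)) = 0) \<and>
         (\<exists>y :: 'a list list \<Rightarrow> nat. (\<exists>\<gamma>\<in>C. y \<gamma> \<noteq> 0) \<and>
            vdiff k (\<lambda>i. \<Sum>\<gamma>\<in>C. y \<gamma> * occ_walk ws \<gamma> i) = 0)))"
    (is "_ \<longleftrightarrow> (\<exists>\<omega> \<pi>. ?trace \<omega> \<pi>)")
proof -
  have lengths: "\<forall>w\<in>set ws. length w \<le> N" using assms(2) by simp
  show ?thesis
  proof
    assume "infinite (WMIX ws)"
    then obtain \<omega> x y where "is_walk N \<omega>" "\<forall>\<gamma>\<in>set (snd (dec \<omega>)). 1 \<le> x \<gamma>"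
      "vdiff (length ws) (\<lambda>i. occ_word ws (hd (fst (dec \<omega>))) i + occ_walk ws (fst (dec \<omega>)) i
         + (\<Sum>\<gamma>\<in>set (snd (dec \<omega>)). x \<gamma> * occ_walk ws \<gamma> i)) = 0"
      "\<exists>\<gamma>\<in>set (snd (dec \<omega>)). y \<gamma> \<noteq> 0"
      "vdiff (length ws) (\<lambda>i. \<Sum>\<gamma>\<in>set (snd (dec \<omega>)). y \<gamma> * occ_walk ws \<gamma> i) = 0"
      by (rule pumpable_if_infinite_WMIX[OF assms(3) lengths])
    moreover from this(1) have "fst (dec \<omega>) \<in> tr \<omega>" "is_path N (fst (dec \<omega>))"
      "tr \<omega> - {fst (dec \<omega>)} = set (snd (dec \<omega>))"
      using path_in_tr_iff tr_minus_path by blast+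
    ultimately have "?trace \<omega> (fst (dec \<omega>))" unfolding Let_def by auto
    then show "\<exists>\<omega> \<pi>. ?trace \<omega> \<pi>" by blast
  next
    assume "\<exists>\<omega> \<pi>. ?trace \<omega> \<pi>"
    then obtain \<omega> \<pi> where \<omega>: "is_walk N \<omega>" "\<pi> \<in> tr \<omega>" "is_path N \<pi>" and trace: "?trace \<omega> \<pi>"
      by blast
    have \<pi>: "\<pi> = fst (dec \<omega>)" using path_in_tr_iff[OF \<omega>(1)] \<omega>(2,3) by blast
    then have C: "tr \<omega> - {\<pi>} = set (snd (dec \<omega>))" using tr_minus_path[OF \<omega>(1)] by simp
    obtain x y where
      "\<forall>\<gamma>\<in>set (snd (dec \<omega>)). 1 \<le> x \<gamma>"
      "vdiff (length ws) (\<lambda>i. occ_word ws (hd \<pi>) i + occ_walk ws \<pi> i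
         + (\<Sum>\<gamma>\<in>set (snd (dec \<omega>)). x \<gamma> * occ_walk ws \<gamma> i)) = 0"
      "\<exists>\<gamma>\<in>set (snd (dec \<omega>)). y \<gamma> \<noteq> 0"
      "vdiff (length ws) (\<lambda>i. \<Sum>\<gamma>\<in>set (snd (dec \<omega>)). y \<gamma> * occ_walk ws \<gamma> i) = 0"
      using trace unfolding Let_def C by blast
    moreover have "is_walk N \<pi>" using \<omega>(3) by (simp add: is_path_def)
    ultimately show "infinite (WMIX ws)"
      using infinite_WMIX_if_pumpable[OF lengths] is_cycle_snd_dec[OF \<omega>(1)] cycles_attached_dec[OF \<omega>(1)]
      unfolding \<pi> by blast
  qed
qed

end
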